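(* A set of atoms $M$ is an answer set by complement of a basic program $P$ if and only if $M$ is a strongly well-supported model of $\mathcal{C}(P)$.
   Context: Fix a countable set $\mathcal{A}$ of atoms. A c-atom is $A=(A_d,A_c)$, $A_d\subseteq\mathcal{A}$, $A_c\subseteq 2^{A_d}$; $(\{p\},\{\{p\}\})$ is elementary; $\bot=(\mathcal{A},\emptyset)$. Rule: $A\leftarrow A_1,\dots,A_k,\mathit{not}\,A_{k+1},\dots,\mathit{not}\,A_n$, $head(r)=A$, $pos(r)=\{A_1,..,A_k\}$, $neg(r)=\{A_{k+1},..,A_n\}$. Program = set of rules; positive if no naf-literals; basic if every head is elementary or $\bot$. $S\models A$ iff $S\cap A_d\in A_c$; $S\models\mathit{not}\,A$ iff $S\cap A_d\notin A_c$; model = satisfies all rules (a rule holds if its head holds or its body fails). Conditional satisfaction: $S\models_M A$ iff $S\models A$ and every $I$ with $S\cap A_d\subseteq I\subseteq M\cap A_d$ lies in $A_c$. For positive basic $P$: $T_P(S,M)=\{a\mid \exists r\in P,\ head(r)=(\{a\},\{\{a\}\}),\ S\models_M B\ \forall B\in pos(r)\}$, $T^0_P(\emptyset,M)=\emptyset$, $T^{i+1}_P(\emptyset,M)=T_P(T^i_P(\emptyset,M),M)$, $T^\infty_P(\emptyset,M)=\bigcup_i T^i_P(\emptyset,M)$; a model $M$ is an answer set iff $M=T^\infty_P(\emptyset,M)$. Complement $\bar A=(A_d,2^{A_d}\setminus A_c)$; $\mathcal{C}(P)$ replaces each $\mathit{not}\,A$ by $\bar A$; answer set by complement of $P$ =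 answer set of $\mathcal{C}(P)$. Level mappings: for $\ell:M\to\{1,2,\dots\}$, $H(X)=\max\{\ell(a)\mid a\in X\}$ ($\max\emptyset=0$), $L(A,M)=\min\{H(X)\mid X\in A_c,\ X\subseteq M,\ X\models_M A\}$, undefined if the set is empty. A model $M$ of basic $P$ is strongly well-supported iff there is such an $\ell$ such that for each $b\in M$ some $r\in P$ has $head(r)=(\{b\},\{\{b\}\})$, $M\models body(r)$, for every $A\in pos(r)$ $L(A,M)$ is defined and $\ell(b)>L(A,M)$, and for every $A\in neg(r)$ $L(\bar A,M)$ is defined and $\ell(b)>L(\bar A,M)$. *)

theory Defs
  imports Main "HOL-Library.Countable" "HOL-Library.Extended_Nat"
begin

text \<open>Atoms are the elements of a countable type 'a; the atom set is UNIV.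
A c-atom is a pair (domain, admissible solutions).\<close>

type_synonym 'a catom = "'a set \<times> 'a set set"

definition wf_catom :: "'a catom \<Rightarrow> bool" where
  "wf_catom A \<longleftrightarrow> snd A \<subseteq> Pow (fst A)"

definition elem :: "'a \<Rightarrow> 'a catom" where
  "elem p = ({p}, {{p}})"

definition bottom :: "'a catom" where
  "bottom = (UNIV, {})"

datatype 'a rule = Rule (head: "'a catom") (pos: "'a catom list") (neg: "'a catom list")

type_synonym 'a program = "'a rule set"

definition wf_prog :: "'a program \<Rightarrow> bool" where
  "wf_prog P \<longleftrightarrow> (\<forall>r\<in>P. wf_catom (head r) \<and> (\<forall>A\<in>set (pos r). wf_catom A)
                          \<and> (\<forall>A\<in>set (neg r). wf_catom A))"

definition positive :: "'a program \<Rightarrow> bool" where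
  "positive P \<longleftrightarrow> (\<forall>r\<in>P. neg r = [])"

definition basic :: "'a program \<Rightarrow> bool" where
  "basic P \<longleftrightarrow> (\<forall>r\<in>P. (\<exists>p. head r = elem p) \<or> head r = bottom)"

definition sat :: "'a set \<Rightarrow> 'a catom \<Rightarrow> bool" where
  "sat S A \<longleftrightarrow> S \<inter> fst A \<in> snd A"

definition sat_body :: "'a set \<Rightarrow> 'a rule \<Rightarrow> bool" where
  "sat_body S r \<longleftrightarrow> (\<forall>A\<in>set (pos r). sat S A) \<and> (\<forall>A\<in>set (neg r). \<not> sat S A)"

definition is_model :: "'a program \<Rightarrow> 'a set \<Rightarrow> bool" where
  "is_model P M \<longleftrightarrow> (\<forall>r\<in>P. sat_body M r \<longrightarrow> sat M (head r))"

definition csat :: "'a set \<Rightarrow> 'a set \<Rightarrow> 'a catom \<Rightarrow> bool" where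
  "csat S M A \<longleftrightarrow> sat S A \<and>
     (\<forall>I. S \<inter> fst A \<subseteq> I \<and> I \<subseteq> M \<inter> fst A \<longrightarrow> I \<in> snd A)"

definition T_op :: "'a program \<Rightarrow> 'a set \<Rightarrow> 'a set \<Rightarrow> 'a set" where
  "T_op P S M = {a. \<exists>r\<in>P. head r = elem a \<and> (\<forall>B\<in>set (pos r). csat S M B)}"

primrec T_iter :: "'a program \<Rightarrow> nat \<Rightarrow> 'a set \<Rightarrow> 'a set" where
  "T_iter P 0 M = {}"
| "T_iter P (Suc i) M = T_op P (T_iter P i M) M"

definition T_inf :: "'a program \<Rightarrow> 'a set \<Rightarrow> 'a set" where
  "T_inf P M = (\<Union>i. T_iter P i M)"

definition answer_set :: "'a program \<Rightarrow> 'a set \<Rightarrow> bool" where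
  "answer_set P M \<longleftrightarrow> is_model P M \<and> M = T_inf P M"

definition compl_catom :: "'a catom \<Rightarrow> 'a catom" where
  "compl_catom A = (fst A, Pow (fst A) - snd A)"

definition compl_rule :: "'a rule \<Rightarrow> 'a rule" where
  "compl_rule r = Rule (head r) (pos r @ map compl_catom (neg r)) []"

definition compl_prog :: "'a program \<Rightarrow> 'a program" where
  "compl_prog P = compl_rule ` P"

definition answer_set_by_complement :: "'a program \<Rightarrow> 'a set \<Rightarrow> bool" where
  "answer_set_by_complement P M \<longleftrightarrow> answer_set (compl_prog P) M"

text \<open>Level mappings. H(X) is the maximum level in X (0 for empty X); it is taken
in enat, i.e. it is \<infinity> if the levels in X are unbounded (max undefined).\<close>
definition H :: "('a \<Rightarrow> nat) \<Rightarrow> 'a set \<Rightarrow> enat" where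
  "H l X = Sup ((\<lambda>a. enat (l a)) ` X)"

definition L_cands :: "('a \<Rightarrow> nat) \<Rightarrow> 'a catom \<Rightarrow> 'a set \<Rightarrow> enat set" where
  "L_cands l A M = H l ` {X. X \<in> snd A \<and> X \<subseteq> M \<and> csat X M A}"

definition L_defined :: "('a \<Rightarrow> nat) \<Rightarrow> 'a catom \<Rightarrow> 'a set \<Rightarrow> bool" where
  "L_defined l A M \<longleftrightarrow> L_cands l A M \<noteq> {}"

definition L :: "('a \<Rightarrow> nat) \<Rightarrow> 'a catom \<Rightarrow> 'a set \<Rightarrow> enat" where
  "L l A M = Inf (L_cands l A M)"

definition strongly_well_supported :: "'a program \<Rightarrow> 'a set \<Rightarrow> bool" where
  "strongly_well_supported P M \<longleftrightarrow> is_model P M \<and>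
     (\<exists>l :: 'a \<Rightarrow> nat. (\<forall>a\<in>M. l a \<ge> 1) \<and>
        (\<forall>b\<in>M. \<exists>r\<in>P. head r = elem b \<and> sat_body M r \<and>
           (\<forall>A\<in>set (pos r). L_defined l A M \<and> enat (l b) > L l A M) \<and>
           (\<forall>A\<in>set (neg r). L_defined l (compl_catom A) M \<and>
                             enat (l b) > L l (compl_catom A) M)))"

end

theory Submission
  imports Defs
begin

(* The complement transformation C(P) removes every negation-as-failure literal,
   so C(P) is a positive program, and an answer set by complement of P is by
   definition an answer set of C(P).  The theorem is therefore an instance of a
   statement about arbitrary positive programs Q:
     M is an answer set of Q  iff  M is a strongly well-supported model of Q.
   (=>) Level each atom by the first stage of the iteration T^i_Q(\<emptyset>, M) that
        contains it; the rule firing at that stage certifies, through the atoms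
        of the preceding stage, a level below it for every body c-atom.
   (<=) By well-founded induction on the level, every b \<in> M lies in stage l(b):
        the supporting rule's body c-atoms are conditionally satisfied by sets of
        atoms of smaller level, which are in earlier stages by induction. *)

lemma csat_mono:
  assumes "csat X M A" and "X \<subseteq> S" and "S \<subseteq> M"
  shows "csat S M A"
proof -
  have all: "I \<in> snd A" if "X \<inter> fst A \<subseteq> I" "I \<subseteq> M \<inter> fst A" for I
    using assms(1) that unfolding csat_def by blast
  have "S \<inter> fst A \<in> snd A" using assms(2,3) by (intro all) auto
  moreover have "I \<in> snd A" if "S \<inter> fst A \<subseteq> I" "I \<subseteq> M \<inter> fst A" for I
    using that assms(2) by (intro all) auto
  ultimately show ?thesis unfolding csat_def sat_def by blast
qed

lemma csat_imp_sat:
  assumes "csat S M A" and "S \<subseteq> M"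
  shows "sat M A"
proof -
  have "S \<inter> fst A \<subseteq> M \<inter> fst A" using assms(2) by blast
  then show ?thesis using assms(1) unfolding csat_def sat_def by blast
qed

lemma csat_restrict:
  assumes "csat S M A"
  shows "csat (S \<inter> fst A) M A" and "S \<inter> fst A \<in> snd A"
  using assms unfolding csat_def sat_def by (simp_all add: Int_assoc)

lemma T_opI:
  "r \<in> Q \<Longrightarrow> head r = elem a \<Longrightarrow> \<forall>B\<in>set (pos r). csat S M B \<Longrightarrow> a \<in> T_op Q S M"
  unfolding T_op_def by blast

lemma T_opE:
  assumes "a \<in> T_op Q S M"
  obtains r where "r \<in> Q" "head r = elem a" "\<forall>B\<in>set (pos r). csat S M B"
  using assms unfolding T_op_def by blast

lemma T_iter_subset_model:
  assumes "is_model Q M" and "positive Q"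
  shows "T_iter Q i M \<subseteq> M"
proof (induction i)
  case 0
  show ?case by simp
next
  case (Suc i)
  show ?case
  proof
    fix a assume "a \<in> T_iter Q (Suc i) M"
    then have "a \<in> T_op Q (T_iter Q i M) M" by simp
    then obtain r where r: "r \<in> Q" "head r = elem a"
      and body: "\<forall>B\<in>set (pos r). csat (T_iter Q i M) M B"
      by (rule T_opE)
    have "neg r = []" using assms(2) r(1) unfolding positive_def by blast
    with body Suc.IH have "sat_body M r"
      unfolding sat_body_def by (auto intro: csat_imp_sat)
    with assms(1) r have "sat M (elem a)" unfolding is_model_def by metis
    then show "a \<in> M" unfolding sat_def elem_def by auto
  qed
qed

text \<open>While the stages stay inside M, the iteration is increasing, because T_Q is
  monotone in its first argument by csat_mono.\<close>
lemma T_iter_Suc_mono: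
  assumes below: "\<And>i. T_iter Q i M \<subseteq> M"
  shows "T_iter Q i M \<subseteq> T_iter Q (Suc i) M"
proof (induction i)
  case 0
  show ?case by simp
next
  case (Suc i)
  show ?case
  proof
    fix a assume "a \<in> T_iter Q (Suc i) M"
    then have "a \<in> T_op Q (T_iter Q i M) M" by simp
    then obtain r where r: "r \<in> Q" "head r = elem a"
      and body: "\<forall>B\<in>set (pos r). csat (T_iter Q i M) M B"
      by (rule T_opE)
    have "\<forall>B\<in>set (pos r). csat (T_iter Q (Suc i) M) M B"
      using body Suc.IH below by (blast intro: csat_mono)
    with r show "a \<in> T_iter Q (Suc (Suc i)) M" by (auto intro: T_opI)
  qed
qed

lemma T_iter_mono:
  assumes "\<And>i. T_iter Q i M \<subseteq> M" and "i \<le> j"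
  shows "T_iter Q i M \<subseteq> T_iter Q j M"
  using lift_Suc_mono_le[of "\<lambda>i. T_iter Q i M", OF T_iter_Suc_mono[OF assms(1)] assms(2)] .

definition stage :: "'a program \<Rightarrow> 'a set \<Rightarrow> 'a \<Rightarrow> nat" where
  "stage Q M a = (LEAST i. a \<in> T_iter Q i M)"

text \<open>Every derived atom occurs at its stage, its stage is minimal, and positive since
  stage 0 is empty; so the stage is an admissible level mapping on T^\<infinity>_Q(\<emptyset>, M).\<close>
lemma stage_in_T_iter:
  assumes "a \<in> T_inf Q M"
  shows "a \<in> T_iter Q (stage Q M a) M"
proof -
  from assms obtain i where "a \<in> T_iter Q i M" unfolding T_inf_def by blast
  then show ?thesis unfolding stage_def by (rule LeastI)
qed

lemma stage_le:
  "a \<in> T_iter Q i M \<Longrightarrow> stage Q M a \<le> i"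
  unfolding stage_def by (rule Least_le)

lemma stage_pos:
  assumes "a \<in> T_inf Q M"
  shows "stage Q M a \<ge> 1"
  using stage_in_T_iter[OF assms] by (cases "stage Q M a") auto

lemma H_le: "(\<And>x. x \<in> X \<Longrightarrow> l x \<le> n) \<Longrightarrow> H l X \<le> enat n"
  unfolding H_def by (auto intro: Sup_least)

lemma H_ge: "x \<in> X \<Longrightarrow> enat (l x) \<le> H l X"
  unfolding H_def by (auto intro: Sup_upper)

lemma L_le_H:
  assumes "csat S M A" and "S \<subseteq> M"
  shows "L_defined l A M" and "L l A M \<le> H l (S \<inter> fst A)"
proof -
  have "H l (S \<inter> fst A) \<in> L_cands l A M"
    using csat_restrict[OF assms(1)] assms(2) unfolding L_cands_def by blast
  then show "L_defined l A M" and "L l A M \<le> H l (S \<inter> fst A)"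
    unfolding L_defined_def L_def by (auto intro: Inf_lower)
qed

text \<open>When L(A, M) is defined it is attained, since enat is well-ordered.\<close>
lemma L_attained:
  assumes "L_defined l A M"
  obtains X where "X \<subseteq> M" "csat X M A" "L l A M = H l X"
proof -
  from assms obtain c where "c \<in> L_cands l A M" unfolding L_defined_def by blast
  then have "L l A M \<in> L_cands l A M" unfolding L_def by (rule wellorder_InfI)
  then show ?thesis using that unfolding L_cands_def by auto
qed

text \<open>The stage function is a level mapping witnessing strong well-support.\<close>
lemma answer_set_imp_strongly_well_supported:
  assumes "positive Q" and "answer_set Q M"
  shows "strongly_well_supported Q M"
proof -
  have model: "is_model Q M" and fixpoint: "M = T_inf Q M"
    using assms(2) unfolding answer_set_def by blast+
  have below: "T_iter Q i M \<subseteq> M" for i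
    using T_iter_subset_model[OF model assms(1)] .
  have derived: "a \<in> T_inf Q M" if "a \<in> M" for a
    using that equalityD1[OF fixpoint] by blast
  let ?l = "stage Q M"
  have "\<exists>r\<in>Q. head r = elem b \<and> sat_body M r \<and>
          (\<forall>A\<in>set (pos r). L_defined ?l A M \<and> enat (?l b) > L ?l A M) \<and>
          (\<forall>A\<in>set (neg r). L_defined ?l (compl_catom A) M \<and>
                            enat (?l b) > L ?l (compl_catom A) M)"
    if bM: "b \<in> M" for b
  proof -
    obtain k where k: "?l b = Suc k"
      using stage_pos[OF derived[OF bM]] by (cases "?l b") auto
    let ?S = "T_iter Q k M"
    have "b \<in> T_op Q ?S M" using stage_in_T_iter[OF derived[OF bM]] k by simp
    then obtain r where r: "r \<in> Q" "head r = elem b"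
      and body: "\<forall>A\<in>set (pos r). csat ?S M A"
      by (rule T_opE)
    have no_neg: "neg r = []" using assms(1) r(1) unfolding positive_def by blast
    have "sat_body M r"
      using body below no_neg unfolding sat_body_def by (auto intro: csat_imp_sat)
    moreover have "L_defined ?l A M \<and> enat (?l b) > L ?l A M" if A: "A \<in> set (pos r)" for A
    proof -
      have cs: "csat ?S M A" using body A by blast
      have "L ?l A M \<le> H ?l (?S \<inter> fst A)" using L_le_H(2)[OF cs below] .
      also have "\<dots> \<le> enat k" by (rule H_le) (auto intro: stage_le)
      also have "\<dots> < enat (?l b)" using k by simp
      finally have "L ?l A M < enat (?l b)" .
      with L_le_H(1)[OF cs below] show ?thesis by simp
    qed
    ultimately show ?thesis using r no_neg by (intro bexI[of _ r]) simp_all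
  qed
  moreover have "\<forall>a\<in>M. ?l a \<ge> 1" using stage_pos[OF derived] by blast
  ultimately show ?thesis
    unfolding strongly_well_supported_def using model by (intro conjI exI[of _ ?l]) auto
qed

text \<open>Conversely, every atom of a strongly well-supported model is derived by the
  stage given by its level; induction on that level.\<close>
lemma strongly_well_supported_imp_answer_set:
  assumes "positive Q" and "strongly_well_supported Q M"
  shows "answer_set Q M"
proof -
  have model: "is_model Q M" using assms(2) unfolding strongly_well_supported_def by blast
  from assms(2) obtain l :: "'a \<Rightarrow> nat" where l_pos: "\<forall>a\<in>M. l a \<ge> 1"
    and support: "\<forall>b\<in>M. \<exists>r\<in>Q. head r = elem b \<and>
                    (\<forall>A\<in>set (pos r). L_defined l A M \<and> enat (l b) > L l A M)"
    unfolding strongly_well_supported_def by blast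
  have below: "T_iter Q i M \<subseteq> M" for i
    using T_iter_subset_model[OF model assms(1)] .
  have derived: "b \<in> M \<longrightarrow> b \<in> T_iter Q (l b) M" for b
  proof (induction "l b" arbitrary: b rule: less_induct)
    case less
    show ?case
    proof
      assume bM: "b \<in> M"
      obtain k where k: "l b = Suc k" using l_pos bM by (cases "l b") auto
      let ?S = "T_iter Q k M"
      from support bM obtain r where r: "r \<in> Q" "head r = elem b"
        and levels: "\<forall>A\<in>set (pos r). L_defined l A M \<and> enat (l b) > L l A M" by blast
      have "csat ?S M A" if A: "A \<in> set (pos r)" for A
      proof -
        from levels A have defined: "L_defined l A M" and L_lt: "L l A M < enat (l b)"
          by auto
        from defined obtain X where X: "X \<subseteq> M" "csat X M A" and "L l A M = H l X"
          by (rule L_attained)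
        with L_lt have lt: "H l X < enat (l b)" by simp
        have "X \<subseteq> ?S"
        proof
          fix x assume x: "x \<in> X"
          have "enat (l x) < enat (l b)" using H_ge[OF x, of l] lt by (rule le_less_trans)
          then have "l x < l b" by simp
          then have "x \<in> T_iter Q (l x) M" and "l x \<le> k"
            using less x X(1) k by auto
          then show "x \<in> ?S" using T_iter_mono[OF below] by blast
        qed
        then show ?thesis using X(2) below by (blast intro: csat_mono)
      qed
      with r have "b \<in> T_op Q ?S M" by (blast intro: T_opI)
      with k show "b \<in> T_iter Q (l b) M" by simp
    qed
  qed
  have "M = T_inf Q M"
    using derived below unfolding T_inf_def by blast
  with model show ?thesis unfolding answer_set_def by blast
qed

lemma answer_set_iff_strongly_well_supported:
  assumes "positive Q"
  shows "answer_set Q M \<longleftrightarrow> strongly_well_supported Q M"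
  using answer_set_imp_strongly_well_supported[OF assms]
        strongly_well_supported_imp_answer_set[OF assms] by blast

lemma positive_compl_prog: "positive (compl_prog P)"
  unfolding positive_def compl_prog_def compl_rule_def by auto

theorem proposition6:
  fixes P :: "('a::countable) program" and M :: "'a set"
  assumes "wf_prog P" and "basic P"
  shows "answer_set_by_complement P M \<longleftrightarrow> strongly_well_supported (compl_prog P) M"
  unfolding answer_set_by_complement_def
  using answer_set_iff_strongly_well_supported[OF positive_compl_prog] .

end
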